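(* Let $m\ge3$, $C$ a set of $m$ candidates, $T$ the set of all $m!$ strict rankings of $C$, $w=(w_1,\dots,w_m)$ with $1=w_1\ge\cdots\ge w_m=0$, $\bar w=(w_1+\cdots+w_m)/m$, and $\sigma_t(\alpha)=w_i$ where $i$ is the position of $\alpha$ in $t\in T$. Let $(N_t)_{t\in T}$ be nonnegative integers with $\sum_tN_t=n$ and $|\alpha|=\sum_tN_t\sigma_t(\alpha)$. Suppose $|a|>|\alpha|$ for all $\alpha\ne a$, and $b\ne a$ satisfies $|b|\ge|\alpha|$ for all $\alpha\ne a$. Let $T_b$ be the set of types ranking $b$ first, $T_i$ ($1\le i\le m-1$) the set of types ranking $b$ in position $i$ and $a$ in position $i+1$, and $T_{ba}=\bigcup_iT_i$. Then the linear program $$\min\sum_{t\in T_{ba}}x_t\ \text{ s.t. }\ \sum_{t\in T_b}y_t(1-\sigma_t(\alpha))-\sum_{t\in T_{ba}}x_t(\sigma_t(b)-\sigma_t(\alpha))\ge|\alpha|-|b|\ \forall\alpha\ne b,\quad \sum_{t\in T_b}y_t=\sum_{t\in T_{ba}}x_t,\quad x_t\ge0,\ y_t\ge0$$ has the same optimal value (with the value $+\infty$ for an infeasible program) as the linear program $$\min\sum_{i=1}^{m-1}z_i\ \text{ s.t. }\ \sum_{i=1}^{m-1}(1-w_i+w_{i+1})z_i\ge|a|-|b|,\quad \sum_{i=1}^{m-1}(1-w_i)z_i\ge n\bar w-|b|,\quad z_i\ge0\ (i=1,\dots,m-1).$$ *)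

theory Defs
  imports "HOL-Analysis.Analysis" "HOL-Combinatorics.Multiset_Permutations"
begin

text \<open>A strict ranking (type) of the candidate set C is a list enumerating C without
  repetition; the candidate at list index 0 is ranked first (position 1).\<close>

definition rankings :: "'c set \<Rightarrow> 'c list set" where
  "rankings C = permutations_of_set C"

definition pos :: "'c list \<Rightarrow> 'c \<Rightarrow> nat" where
  "pos t alpha = Suc (LEAST i. i < length t \<and> t ! i = alpha)"

definition sigma :: "(nat \<Rightarrow> real) \<Rightarrow> 'c list \<Rightarrow> 'c \<Rightarrow> real" where
  "sigma w t alpha = w (pos t alpha)"

definition score :: "'c set \<Rightarrow> (nat \<Rightarrow> real) \<Rightarrow> ('c list \<Rightarrow> nat) \<Rightarrow> 'c \<Rightarrow> real" where
  "score C w N alpha = (\<Sum>t\<in>rankings C. real (N t) * sigma w t alpha)"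

definition T_first :: "'c set \<Rightarrow> 'c \<Rightarrow> 'c list set" where
  "T_first C b = {t \<in> rankings C. pos t b = 1}"

definition T_pair :: "'c set \<Rightarrow> 'c \<Rightarrow> 'c \<Rightarrow> nat \<Rightarrow> 'c list set" where
  "T_pair C b a i = {t \<in> rankings C. pos t b = i \<and> pos t a = i + 1}"

definition T_ba :: "'c set \<Rightarrow> 'c \<Rightarrow> 'c \<Rightarrow> 'c list set" where
  "T_ba C b a = (\<Union>i\<in>{1..card C - 1}. T_pair C b a i)"

text \<open>Optimal value (in the extended reals, +infinity if infeasible) of the first LP.\<close>
definition LP1_value :: "'c set \<Rightarrow> (nat \<Rightarrow> real) \<Rightarrow> ('c list \<Rightarrow> nat) \<Rightarrow> 'c \<Rightarrow> 'c \<Rightarrow> ereal" where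
  "LP1_value C w N a b = Inf { ereal (\<Sum>t\<in>T_ba C b a. x t) | x y.
      (\<forall>alpha\<in>C. alpha \<noteq> b \<longrightarrow>
         (\<Sum>t\<in>T_first C b. y t * (1 - sigma w t alpha))
         - (\<Sum>t\<in>T_ba C b a. x t * (sigma w t b - sigma w t alpha))
         \<ge> score C w N alpha - score C w N b) \<and>
      (\<Sum>t\<in>T_first C b. y t) = (\<Sum>t\<in>T_ba C b a. x t) \<and>
      (\<forall>t\<in>T_ba C b a. x t \<ge> 0) \<and> (\<forall>t\<in>T_first C b. y t \<ge> 0) }"

definition LP2_value :: "'c set \<Rightarrow> (nat \<Rightarrow> real) \<Rightarrow> ('c list \<Rightarrow> nat) \<Rightarrow> 'c \<Rightarrow> 'c \<Rightarrow> ereal" where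
  "LP2_value C w N a b = (let m = card C; n = (\<Sum>t\<in>rankings C. N t);
      wbar = (\<Sum>i=1..m. w i) / real m in
    Inf { ereal (\<Sum>i=1..m-1. z i) | z.
      (\<Sum>i=1..m-1. (1 - w i + w (i+1)) * z i) \<ge> score C w N a - score C w N b \<and>
      (\<Sum>i=1..m-1. (1 - w i) * z i) \<ge> real n * wbar - score C w N b \<and>
      (\<forall>i\<in>{1..m-1}. z i \<ge> 0) })"

end

theory Submission
  imports Defs
begin

text \<open>
  Call \<open>gain x y \<alpha>\<close> what \<open>b\<close> gains on \<open>\<alpha>\<close> when \<open>x t\<close> voters of each type
  \<open>t \<in> T\<^sub>b\<^sub>a\<close> are moved to the types \<open>u \<in> T\<^sub>b\<close>, \<open>y u\<close> of them to \<open>u\<close>; the first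
  program asks for the cheapest move after which \<open>b\<close> is not behind any other candidate.

  A feasible move aggregates to the point \<open>z i = \<Sum>t\<in>T\<^sub>i. x t\<close> of the second program,
  of the same cost: as \<open>a\<close> scores at least \<open>0\<close> in the new types, the constraint for \<open>a\<close>
  gives the first inequality, and as every ranking hands out the same total score, the sum
  of all constraints gives the second one.

  Conversely, given \<open>z\<close>, move \<open>z i\<close> voters out of \<open>T\<^sub>i\<close> by putting \<open>b\<close> on top, and
  for a fraction \<open>\<theta>\<close> of them also swapping \<open>a\<close> with the last candidate, where \<open>\<theta>\<close> is
  just large enough for \<open>b\<close> to catch up with \<open>a\<close>. Of the remaining candidates only one
  per moved type, its beneficiary, can gain on \<open>b\<close>; averaging over the types of \<open>T\<^sub>i\<close>
  with a given beneficiary makes the gain of \<open>b\<close> equal on all the others. Choosing the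
  beneficiaries with probabilities proportional to the slacks \<open>|b| - |\<gamma>|\<close> (plus that
  common gain) then satisfies every constraint, because the second inequality bounds the
  total loss.
\<close>

section \<open>Positions in rankings\<close>

lemma pos_eqI:
  assumes "distinct t" "j < length t" "t ! j = x"
  shows "pos t x = Suc j"
  unfolding pos_def using assms
  by (intro arg_cong[where f=Suc] Least_equality) (auto simp: nth_eq_iff_index_eq)

lemma
  assumes "x \<in> set t"
  shows pos_ge_1: "1 \<le> pos t x" and pos_le_length: "pos t x \<le> length t"
    and nth_pos: "t ! (pos t x - 1) = x"
proof -
  have "\<exists>i. i < length t \<and> t ! i = x"
    using assms by (auto simp: in_set_conv_nth)
  then have "(LEAST i. i < length t \<and> t ! i = x) < length t \<and>
      t ! (LEAST i. i < length t \<and> t ! i = x) = x"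
    by (rule LeastI_ex)
  then show "1 \<le> pos t x" "pos t x \<le> length t" "t ! (pos t x - 1) = x"
    unfolding pos_def by auto
qed

lemma pos_eq_iff:
  assumes "distinct t" "x \<in> set t" "y \<in> set t"
  shows "pos t x = pos t y \<longleftrightarrow> x = y"
  using nth_pos[OF assms(2)] nth_pos[OF assms(3)] by metis

lemma pos_append:
  assumes "distinct (xs @ ys)" "y \<in> set (xs @ ys)"
  shows "pos (xs @ ys) y = (if y \<in> set xs then pos xs y else length xs + pos ys y)"
proof (cases "y \<in> set xs")
  case True
  have "pos (xs @ ys) y = Suc (pos xs y - 1)"
    using True assms(1) pos_ge_1[OF True] pos_le_length[OF True] nth_pos[OF True]
    by (intro pos_eqI) (auto simp: nth_append)
  then show ?thesis using True pos_ge_1[OF True] by simp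
next
  case False
  then have y: "y \<in> set ys" using assms(2) by simp
  have "pos (xs @ ys) y = Suc (length xs + (pos ys y - 1))"
    using y assms(1) pos_ge_1[OF y] pos_le_length[OF y] nth_pos[OF y]
    by (intro pos_eqI) (auto simp: nth_append)
  then show ?thesis using False pos_ge_1[OF y] by simp
qed

lemma pos_Cons:
  assumes "distinct (x # xs)" "y \<in> set (x # xs)"
  shows "pos (x # xs) y = (if y = x then 1 else Suc (pos xs y))"
  using pos_append[of "[x]" xs y] pos_eqI[of "[x]" 0 x] assms by auto

lemma pos_append_Cons:
  assumes "distinct (xs @ y # ys)"
  shows "pos (xs @ y # ys) y = Suc (length xs)"
  using assms by (simp add: pos_append pos_Cons)

lemma pos_map_inj:
  assumes "inj f"
  shows "pos (map f t) (f x) = pos t x"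
  unfolding pos_def using assms
  by (intro arg_cong[where f=Suc] arg_cong[where f=Least] ext) (auto simp: inj_eq)

lemma pos_map_transpose:
  assumes "distinct t" "c \<in> set t" "d \<in> set t" "x \<in> set t"
  shows "pos (map (Transposition.transpose c d) t) x
    = Transposition.transpose (pos t c) (pos t d) (pos t x)"
proof -
  have "pos (map (Transposition.transpose c d) t) x = pos t (Transposition.transpose c d x)"
    using pos_map_inj[OF inj_transpose, of c d t "Transposition.transpose c d x"] by simp
  also have "\<dots> = Transposition.transpose (pos t c) (pos t d) (pos t x)"
    using assms by (simp add: Transposition.transpose_def pos_eq_iff)
  finally show ?thesis .
qed

lemma sum_pos_permutation:
  assumes "t \<in> permutations_of_set C"
  shows "(\<Sum>x\<in>C. g (pos t x)) = (\<Sum>p=1..card C. g p)"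
proof -
  have t: "set t = C" "distinct t" "length t = card C"
    using permutations_of_setD[OF assms] distinct_card by metis+
  have "(\<Sum>x\<in>C. g (pos t x)) = (\<Sum>x\<in>(!) t ` {..<length t}. g (pos t x))"
    using t(1) by (simp add: lessThan_atLeast0 nth_image)
  also have "\<dots> = (\<Sum>j<length t. g (pos t (t ! j)))"
    by (rule sum.reindex_cong[where l="(!) t"]) (auto simp: inj_on_nth t(2))
  also have "\<dots> = (\<Sum>j<length t. g (Suc j))"
    using t(2) by (simp add: pos_eqI)
  also have "\<dots> = (\<Sum>p=1..card C. g p)"
    using t(3) by (simp add: sum.atLeast1_atMost_eq)
  finally show ?thesis .
qed

definition promote :: "'a \<Rightarrow> 'a list \<Rightarrow> 'a list" where
  "promote x t = x # remove1 x t"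

definition promoted_pos :: "nat \<Rightarrow> nat \<Rightarrow> nat" where
  "promoted_pos i p = (if p < i then Suc p else if p = i then 1 else p)"

lemma promote_permutation:
  assumes "t \<in> permutations_of_set C" "x \<in> C"
  shows "promote x t \<in> permutations_of_set C"
  using assms by (auto simp: permutations_of_set_def promote_def)

lemma pos_promote:
  assumes "distinct t" "x \<in> set t" "y \<in> set t"
  shows "pos (promote x t) y = promoted_pos (pos t x) (pos t y)"
proof -
  obtain xs ys where t: "t = xs @ x # ys"
    using split_list[OF assms(2)] by blast
  have x: "x \<notin> set xs" "x \<notin> set ys" and d: "distinct (xs @ ys)"
    using assms(1) unfolding t by auto
  have "promote x t = x # xs @ ys"
    using x by (simp add: promote_def t remove1_append)
  moreover have "pos t x = Suc (length xs)"
    using assms(1) unfolding t by (rule pos_append_Cons)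
  ultimately show ?thesis
    using assms(1,3) x d pos_le_length[of y xs] pos_ge_1[of y ys]
    by (auto simp: t pos_append pos_Cons promoted_pos_def)
qed

definition swap_last :: "'a \<Rightarrow> 'a list \<Rightarrow> 'a list" where
  "swap_last x t = map (Transposition.transpose x (last t)) t"

lemma map_transpose_permutation:
  assumes "t \<in> permutations_of_set C" "c \<in> C" "d \<in> C"
  shows "map (Transposition.transpose c d) t \<in> permutations_of_set C"
  using assms by (auto simp: permutations_of_set_def distinct_map)

section \<open>The two programs\<close>

locale election =
  fixes C :: "'c set" and w :: "nat \<Rightarrow> real" and N :: "'c list \<Rightarrow> nat" and a b :: 'c
  assumes finite_C: "finite C" and card_C_ge_3: "card C \<ge> 3"
    and w_first: "w 1 = 1" and w_last: "w (card C) = 0"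
    and w_antimono: "\<And>i j. 1 \<le> i \<Longrightarrow> i \<le> j \<Longrightarrow> j \<le> card C \<Longrightarrow> w j \<le> w i"
    and a_in_C: "a \<in> C" and b_in_C: "b \<in> C" and b_ne_a: "b \<noteq> a"
begin

abbreviation m :: nat where "m \<equiv> card C"
abbreviation \<sigma> :: "'c list \<Rightarrow> 'c \<Rightarrow> real" where "\<sigma> \<equiv> sigma w"
abbreviation sc :: "'c \<Rightarrow> real" where "sc \<equiv> score C w N"
abbreviation T\<^sub>b :: "'c list set" where "T\<^sub>b \<equiv> T_first C b"
abbreviation T\<^sub>b\<^sub>a :: "'c list set" where "T\<^sub>b\<^sub>a \<equiv> T_ba C b a"
abbreviation T\<^sub>i :: "nat \<Rightarrow> 'c list set" where "T\<^sub>i \<equiv> T_pair C b a"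

definition W :: real where "W = (\<Sum>p=1..m. w p)"
definition voters :: nat where "voters = (\<Sum>t\<in>rankings C. N t)"

definition gain :: "('c list \<Rightarrow> real) \<Rightarrow> ('c list \<Rightarrow> real) \<Rightarrow> 'c \<Rightarrow> real" where
  "gain x y \<alpha> = (\<Sum>t\<in>T\<^sub>b. y t * (1 - \<sigma> t \<alpha>)) - (\<Sum>t\<in>T\<^sub>b\<^sub>a. x t * (\<sigma> t b - \<sigma> t \<alpha>))"

definition LP1_feasible :: "('c list \<Rightarrow> real) \<Rightarrow> ('c list \<Rightarrow> real) \<Rightarrow> bool" where
  "LP1_feasible x y \<longleftrightarrow> (\<forall>\<alpha>\<in>C. \<alpha> \<noteq> b \<longrightarrow> gain x y \<alpha> \<ge> sc \<alpha> - sc b) \<and>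
     (\<Sum>t\<in>T\<^sub>b. y t) = (\<Sum>t\<in>T\<^sub>b\<^sub>a. x t) \<and> (\<forall>t\<in>T\<^sub>b\<^sub>a. x t \<ge> 0) \<and> (\<forall>t\<in>T\<^sub>b. y t \<ge> 0)"

definition LP2_feasible :: "(nat \<Rightarrow> real) \<Rightarrow> bool" where
  "LP2_feasible z \<longleftrightarrow> (\<Sum>i=1..m-1. (1 - w i + w (i+1)) * z i) \<ge> sc a - sc b \<and>
     (\<Sum>i=1..m-1. (1 - w i) * z i) \<ge> real voters * (W / real m) - sc b \<and>
     (\<forall>i\<in>{1..m-1}. z i \<ge> 0)"

lemma LP1_value_eq: "LP1_value C w N a b = Inf {ereal (\<Sum>t\<in>T\<^sub>b\<^sub>a. x t) | x y. LP1_feasible x y}"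
  unfolding LP1_value_def LP1_feasible_def gain_def ..

lemma LP2_value_eq: "LP2_value C w N a b = Inf {ereal (\<Sum>i=1..m-1. z i) | z. LP2_feasible z}"
  unfolding LP2_value_def LP2_feasible_def W_def voters_def Let_def ..

lemma
  assumes "t \<in> rankings C"
  shows set_ranking: "set t = C" and distinct_ranking: "distinct t"
    and length_ranking: "length t = m"
  using assms permutations_of_setD distinct_card unfolding rankings_def by metis+

lemma pos_bounds:
  assumes "t \<in> rankings C" "\<alpha> \<in> C"
  shows "1 \<le> pos t \<alpha>" "pos t \<alpha> \<le> m"
  using assms pos_ge_1 pos_le_length set_ranking length_ranking by metis+

lemma w_nonneg: "p \<le> m \<Longrightarrow> 1 \<le> p \<Longrightarrow> 0 \<le> w p"
  using w_antimono[of p m] w_last by simp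

lemma w_le_1: "p \<le> m \<Longrightarrow> 1 \<le> p \<Longrightarrow> w p \<le> 1"
  using w_antimono[of 1 p] w_first by simp

lemma sigma_nonneg: "t \<in> rankings C \<Longrightarrow> \<alpha> \<in> C \<Longrightarrow> 0 \<le> \<sigma> t \<alpha>"
  using pos_bounds w_nonneg by (simp add: sigma_def)

lemma sum_sigma: "t \<in> rankings C \<Longrightarrow> (\<Sum>\<alpha>\<in>C. \<sigma> t \<alpha>) = W"
  unfolding sigma_def W_def rankings_def by (rule sum_pos_permutation)

lemma sum_sigma_gap:
  assumes "t \<in> rankings C"
  shows "(\<Sum>\<alpha>\<in>C-{b}. c - \<sigma> t \<alpha>) = (real m - 1) * c - (W - \<sigma> t b)"
proof -
  have "(\<Sum>\<alpha>\<in>C-{b}. \<sigma> t \<alpha>) = W - \<sigma> t b"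
    using sum_sigma[OF assms] finite_C b_in_C by (simp add: sum_diff1)
  then show ?thesis
    using finite_C b_in_C card_C_ge_3 by (simp add: sum_subtractf of_nat_diff)
qed

lemma finite_rankings: "finite (rankings C)"
  by (simp add: rankings_def)

lemma T_first_subset: "T\<^sub>b \<subseteq> rankings C"
  by (auto simp: T_first_def)

lemma T_pair_subset: "T\<^sub>i i \<subseteq> rankings C"
  by (auto simp: T_pair_def)

lemma T_ba_subset: "T\<^sub>b\<^sub>a \<subseteq> rankings C"
  by (auto simp: T_ba_def T_pair_def)

lemma finite_T_first: "finite T\<^sub>b"
  using T_first_subset finite_rankings by (rule finite_subset)

lemma finite_T_pair: "finite (T\<^sub>i i)"
  using T_pair_subset finite_rankings by (rule finite_subset)

lemma sum_T_ba: "(\<Sum>t\<in>T\<^sub>b\<^sub>a. f t) = (\<Sum>i=1..m-1. \<Sum>t\<in>T\<^sub>i i. f t)"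
  unfolding T_ba_def using finite_T_pair by (intro sum.UNION_disjoint) (auto simp: T_pair_def)

lemma sigma_T_first: "t \<in> T\<^sub>b \<Longrightarrow> \<sigma> t b = 1"
  using w_first by (simp add: T_first_def sigma_def)

lemma sigma_T_pair: "t \<in> T\<^sub>i i \<Longrightarrow> \<sigma> t b = w i \<and> \<sigma> t a = w (Suc i)"
  by (simp add: T_pair_def sigma_def)

lemma sum_score: "(\<Sum>\<alpha>\<in>C. sc \<alpha>) = real voters * W"
proof -
  have "(\<Sum>\<alpha>\<in>C. sc \<alpha>) = (\<Sum>t\<in>rankings C. real (N t) * (\<Sum>\<alpha>\<in>C. \<sigma> t \<alpha>))"
    unfolding score_def by (simp add: sum.swap[of _ C] sum_distrib_left)
  also have "\<dots> = (\<Sum>t\<in>rankings C. real (N t) * W)"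
    using sum_sigma by simp
  finally show ?thesis
    by (simp add: voters_def sum_distrib_right)
qed

lemma sum_score_gap: "(\<Sum>\<alpha>\<in>C-{b}. sc \<alpha> - sc b) = real voters * W - real m * sc b"
proof -
  have "(\<Sum>\<alpha>\<in>C-{b}. sc \<alpha> - sc b) = (\<Sum>\<alpha>\<in>C. sc \<alpha>) - sc b - real (m - 1) * sc b"
    using finite_C b_in_C by (simp add: sum_subtractf sum_diff1)
  then show ?thesis
    using sum_score card_C_ge_3 by (simp add: of_nat_diff algebra_simps)
qed

section \<open>From the first program to the second\<close>

definition aggregate :: "('c list \<Rightarrow> real) \<Rightarrow> nat \<Rightarrow> real" where
  "aggregate x i = (\<Sum>t\<in>T\<^sub>i i. x t)"

lemma sum_aggregate: "(\<Sum>i=1..m-1. aggregate x i) = (\<Sum>t\<in>T\<^sub>b\<^sub>a. x t)"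
  unfolding aggregate_def by (rule sum_T_ba[symmetric])

lemma sum_T_ba_aggregate:
  "(\<Sum>t\<in>T\<^sub>b\<^sub>a. x t * f (\<sigma> t b) (\<sigma> t a)) = (\<Sum>i=1..m-1. aggregate x i * f (w i) (w (Suc i)))"
  unfolding sum_T_ba aggregate_def sum_distrib_right
  by (intro sum.cong refl) (simp add: sigma_T_pair)

lemma gain_a_le:
  assumes "\<forall>t\<in>T\<^sub>b. y t \<ge> 0" "(\<Sum>t\<in>T\<^sub>b. y t) = (\<Sum>t\<in>T\<^sub>b\<^sub>a. x t)"
  shows "gain x y a \<le> (\<Sum>i=1..m-1. (1 - w i + w (Suc i)) * aggregate x i)"
proof -
  have "(\<Sum>t\<in>T\<^sub>b. y t * (1 - \<sigma> t a)) \<le> (\<Sum>t\<in>T\<^sub>b. y t)"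
    using assms(1) T_first_subset sigma_nonneg[OF _ a_in_C]
    by (intro sum_mono) (auto simp: mult_left_le subset_iff)
  moreover have "(\<Sum>t\<in>T\<^sub>b\<^sub>a. x t * (\<sigma> t b - \<sigma> t a))
      = (\<Sum>i=1..m-1. aggregate x i * (w i - w (Suc i)))"
    by (rule sum_T_ba_aggregate)
  moreover have "(\<Sum>i=1..m-1. (1 - w i + w (Suc i)) * aggregate x i)
      = (\<Sum>i=1..m-1. aggregate x i) - (\<Sum>i=1..m-1. aggregate x i * (w i - w (Suc i)))"
    by (simp add: sum_subtractf[symmetric] algebra_simps)
  ultimately show ?thesis
    using assms(2) sum_aggregate[of x] unfolding gain_def by linarith
qed

lemma sum_gain:
  assumes "(\<Sum>t\<in>T\<^sub>b. y t) = (\<Sum>t\<in>T\<^sub>b\<^sub>a. x t)"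
  shows "(\<Sum>\<alpha>\<in>C-{b}. gain x y \<alpha>) = real m * (\<Sum>i=1..m-1. (1 - w i) * aggregate x i)"
proof -
  have "(\<Sum>\<alpha>\<in>C-{b}. \<Sum>t\<in>T\<^sub>b. y t * (1 - \<sigma> t \<alpha>)) = (\<Sum>t\<in>T\<^sub>b. y t * (\<Sum>\<alpha>\<in>C-{b}. 1 - \<sigma> t \<alpha>))"
    by (simp add: sum.swap[of _ "C-{b}"] sum_distrib_left)
  also have "\<dots> = (\<Sum>t\<in>T\<^sub>b. y t * (real m - W))"
    by (intro sum.cong refl) (simp add: sum_sigma_gap[OF subsetD[OF T_first_subset]] sigma_T_first)
  finally have Y: "(\<Sum>\<alpha>\<in>C-{b}. \<Sum>t\<in>T\<^sub>b. y t * (1 - \<sigma> t \<alpha>)) = (real m - W) * (\<Sum>t\<in>T\<^sub>b\<^sub>a. x t)"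
    using assms by (simp add: sum_distrib_right[symmetric] mult.commute)
  have "(\<Sum>\<alpha>\<in>C-{b}. \<Sum>t\<in>T\<^sub>b\<^sub>a. x t * (\<sigma> t b - \<sigma> t \<alpha>))
      = (\<Sum>t\<in>T\<^sub>b\<^sub>a. x t * (\<Sum>\<alpha>\<in>C-{b}. \<sigma> t b - \<sigma> t \<alpha>))"
    by (simp add: sum.swap[of _ "C-{b}"] sum_distrib_left)
  also have "\<dots> = (\<Sum>t\<in>T\<^sub>b\<^sub>a. x t * (real m * \<sigma> t b - W))"
    by (intro sum.cong refl) (simp add: sum_sigma_gap[OF subsetD[OF T_ba_subset]] algebra_simps)
  also have "\<dots> = real m * (\<Sum>t\<in>T\<^sub>b\<^sub>a. x t * \<sigma> t b) - W * (\<Sum>t\<in>T\<^sub>b\<^sub>a. x t)"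
    by (simp add: right_diff_distrib sum_subtractf sum_distrib_left mult_ac)
  also have "\<dots> = real m * (\<Sum>i=1..m-1. aggregate x i * w i) - W * (\<Sum>t\<in>T\<^sub>b\<^sub>a. x t)"
    using sum_T_ba_aggregate[of x "\<lambda>s _. s"] by simp
  finally have X: "(\<Sum>\<alpha>\<in>C-{b}. \<Sum>t\<in>T\<^sub>b\<^sub>a. x t * (\<sigma> t b - \<sigma> t \<alpha>))
      = real m * (\<Sum>i=1..m-1. aggregate x i * w i) - W * (\<Sum>t\<in>T\<^sub>b\<^sub>a. x t)" .
  have "(\<Sum>\<alpha>\<in>C-{b}. gain x y \<alpha>)
      = real m * ((\<Sum>t\<in>T\<^sub>b\<^sub>a. x t) - (\<Sum>i=1..m-1. aggregate x i * w i))"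
    unfolding gain_def sum_subtractf Y X by (simp add: algebra_simps)
  also have "\<dots> = real m * (\<Sum>i=1..m-1. (1 - w i) * aggregate x i)"
    unfolding sum_aggregate[symmetric] by (simp add: sum_subtractf[symmetric] algebra_simps)
  finally show ?thesis .
qed

lemma LP2_feasible_aggregate:
  assumes "LP1_feasible x y"
  shows "LP2_feasible (aggregate x)"
proof -
  have gain: "\<And>\<alpha>. \<alpha> \<in> C \<Longrightarrow> \<alpha> \<noteq> b \<Longrightarrow> gain x y \<alpha> \<ge> sc \<alpha> - sc b"
    and yx: "(\<Sum>t\<in>T\<^sub>b. y t) = (\<Sum>t\<in>T\<^sub>b\<^sub>a. x t)"
    and x: "\<forall>t\<in>T\<^sub>b\<^sub>a. x t \<ge> 0" and y: "\<forall>t\<in>T\<^sub>b. y t \<ge> 0"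
    using assms by (auto simp: LP1_feasible_def)
  have "sc a - sc b \<le> (\<Sum>i=1..m-1. (1 - w i + w (Suc i)) * aggregate x i)"
    using gain[OF a_in_C b_ne_a[symmetric]] gain_a_le[OF y yx] by simp
  moreover have "real voters * W - real m * sc b \<le> real m * (\<Sum>i=1..m-1. (1 - w i) * aggregate x i)"
    unfolding sum_score_gap[symmetric] sum_gain[OF yx, symmetric]
    using gain by (intro sum_mono) auto
  then have "real voters * (W / real m) - sc b \<le> (\<Sum>i=1..m-1. (1 - w i) * aggregate x i)"
    using card_C_ge_3 by (simp add: field_simps)
  moreover have "\<forall>i\<in>{1..m-1}. aggregate x i \<ge> 0"
    using x by (auto simp: aggregate_def T_ba_def intro!: sum_nonneg)
  ultimately show ?thesis
    by (simp add: LP2_feasible_def)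
qed

lemma LP2_value_le_LP1_value: "LP2_value C w N a b \<le> LP1_value C w N a b"
  unfolding LP1_value_eq LP2_value_eq
  using LP2_feasible_aggregate sum_aggregate by (intro Inf_mono) force

end

section \<open>From the second program to the first\<close>

lemma mixing_weight_exists:
  fixes A B D E M :: real
  assumes "0 \<le> A" "D \<le> A + B" "D - E \<le> M * A" "0 \<le> E" "1 \<le> M"
  shows "\<exists>\<theta>. 0 \<le> \<theta> \<and> \<theta> \<le> 1 \<and> D \<le> A + \<theta> * B \<and> - E \<le> M * A - (A + \<theta> * B)"
proof (cases "D \<le> A")
  case True
  have "A \<le> M * A" using assms(1,5) by (simp add: mult_le_cancel_right1)
  with True assms(4) show ?thesis by (intro exI[of _ 0]) auto
next
  case False
  then have "B > 0" using assms(2) by simp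
  with False assms(2,3) show ?thesis
    by (intro exI[of _ "(D - A) / B"]) (auto simp: field_simps)
qed

lemma beneficiary_weights_exist:
  fixes e :: "'a \<Rightarrow> real" and V U :: real
  assumes "finite K" "K \<noteq> {}" "\<And>\<gamma>. \<gamma> \<in> K \<Longrightarrow> 0 \<le> e \<gamma>" "0 \<le> U"
    and "- sum e K \<le> V + (real (card K) - 1) * U"
  shows "\<exists>\<rho>. (\<forall>\<gamma>\<in>K. 0 \<le> \<rho> \<gamma>) \<and> sum \<rho> K = 1 \<and> (\<forall>\<gamma>\<in>K. - e \<gamma> \<le> \<rho> \<gamma> * V + (1 - \<rho> \<gamma>) * U)"
proof -
  define k where "k = real (card K)"
  define Q where "Q = k * U + sum e K"
  have k: "1 \<le> k" using assms(1,2) by (simp add: k_def Suc_le_eq card_gt_0_iff)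
  have E: "0 \<le> sum e K" using assms(3) by (simp add: sum_nonneg)
  show ?thesis
  proof (cases "Q = 0")
    case True
    moreover have "0 \<le> k * U" using k assms(4) by simp
    ultimately have "U = 0" "sum e K = 0"
      using k E unfolding Q_def by (auto simp: add_nonneg_eq_0_iff)
    then have "e \<gamma> = 0" if "\<gamma> \<in> K" for \<gamma>
      using sum_nonneg_eq_0_iff[OF assms(1)] assms(3) that by blast
    moreover have "0 \<le> V" using assms(5) \<open>U = 0\<close> \<open>sum e K = 0\<close> by simp
    ultimately show ?thesis
      using k \<open>U = 0\<close> by (intro exI[of _ "\<lambda>_. 1 / k"]) (auto simp: k_def)
  next
    case False
    moreover have "0 \<le> k * U" using k assms(4) by simp
    ultimately have Q: "0 < Q" using E unfolding Q_def by linarith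
    define \<rho> where "\<rho> \<gamma> = (U + e \<gamma>) / Q" for \<gamma>
    have "- e \<gamma> \<le> \<rho> \<gamma> * V + (1 - \<rho> \<gamma>) * U" if "\<gamma> \<in> K" for \<gamma>
    proof -
      have \<rho>: "0 \<le> \<rho> \<gamma>" using Q assms(3,4) that by (simp add: \<rho>_def)
      have "U - V \<le> Q" using assms(5) by (simp add: Q_def k_def algebra_simps)
      then have "\<rho> \<gamma> * (U - V) \<le> \<rho> \<gamma> * Q"
        using \<rho> by (rule mult_left_mono)
      also have "\<dots> = U + e \<gamma>" using Q by (simp add: \<rho>_def)
      finally show ?thesis by (simp add: algebra_simps)
    qed
    moreover have "sum \<rho> K = 1"
      using Q by (simp add: \<rho>_def Q_def k_def sum.distrib sum_divide_distrib[symmetric])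
    ultimately show ?thesis
      using Q assms(3,4) by (intro exI[of _ \<rho>]) (auto simp: \<rho>_def)
  qed
qed

context election
begin

lemma T_pairD:
  assumes "t \<in> T\<^sub>i i"
  shows "t \<in> rankings C" "pos t b = i" "pos t a = Suc i" "1 \<le> i" "i < m"
proof -
  show t: "t \<in> rankings C" and "pos t b = i" "pos t a = Suc i"
    using assms by (auto simp: T_pair_def)
  then show "1 \<le> i" "i < m"
    using pos_bounds[OF t b_in_C] pos_bounds[OF t a_in_C] by auto
qed

lemma T_baD: "t \<in> T\<^sub>b\<^sub>a \<Longrightarrow> t \<in> T\<^sub>i (pos t b)"
  by (auto simp: T_ba_def T_pair_def)

lemma last_ranking:
  assumes "t \<in> rankings C"
  shows "last t \<in> C" "pos t (last t) = m"
proof -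
  have "t \<noteq> []"
    using length_ranking[OF assms] card_C_ge_3 by auto
  then have "last t = t ! (m - 1)"
    using length_ranking[OF assms] by (simp add: last_conv_nth)
  then show "last t \<in> C" "pos t (last t) = m"
    using set_ranking[OF assms] length_ranking[OF assms] distinct_ranking[OF assms]
      card_C_ge_3 pos_eqI[of t "m - 1"] by auto
qed

lemma swap_last_ranking:
  assumes "t \<in> rankings C" "x \<in> C"
  shows "swap_last x t \<in> rankings C"
  using assms last_ranking(1)[OF assms(1)] map_transpose_permutation
  by (auto simp: swap_last_def rankings_def)

lemma promote_b_T_first:
  assumes "t \<in> rankings C"
  shows "promote b t \<in> T\<^sub>b"
proof -
  have "promote b t \<in> rankings C"
    using assms b_in_C promote_permutation by (auto simp: rankings_def)
  moreover have "pos (promote b t) b = 1"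
    using distinct_ranking[OF calculation] by (simp add: promote_def pos_eqI)
  ultimately show ?thesis by (simp add: T_first_def)
qed

lemma pos_promote_b:
  assumes "t \<in> T\<^sub>i i" "\<gamma> \<in> C"
  shows "pos (promote b t) \<gamma> = promoted_pos i (pos t \<gamma>)"
  using assms T_pairD[OF assms(1)] set_ranking distinct_ranking b_in_C
  by (metis pos_promote)

lemma pos_promote_b_swap_last:
  assumes "t \<in> T\<^sub>i i" "\<gamma> \<in> C"
  shows "pos (promote b (swap_last a t)) \<gamma>
    = promoted_pos i (Transposition.transpose (Suc i) m (pos t \<gamma>))"
proof -
  note t = T_pairD[OF assms(1)]
  have pos_swap: "pos (swap_last a t) \<delta> = Transposition.transpose (Suc i) m (pos t \<delta>)"
    if "\<delta> \<in> C" for \<delta>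
    using pos_map_transpose[of t a "last t" \<delta>] that t a_in_C last_ranking[OF t(1)]
      set_ranking[OF t(1)] distinct_ranking[OF t(1)]
    by (simp add: swap_last_def)
  have "pos (swap_last a t) b = i"
    using pos_swap[OF b_in_C] t by simp
  moreover have "swap_last a t \<in> rankings C"
    using swap_last_ranking[OF t(1) a_in_C] .
  ultimately show ?thesis
    using pos_promote[of "swap_last a t" b \<gamma>] pos_swap[OF assms(2)] assms(2) b_in_C
      set_ranking distinct_ranking by metis
qed

definition moved_gain :: "real \<Rightarrow> nat \<Rightarrow> nat \<Rightarrow> real" where
  "moved_gain \<theta> i p = 1 - w i + w p - ((1 - \<theta>) * w (promoted_pos i p)
     + \<theta> * w (promoted_pos i (Transposition.transpose (Suc i) m p)))"

lemma moved_gain_eq: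
  assumes "t \<in> T\<^sub>i i" "\<gamma> \<in> C"
  shows "(1 - \<theta>) * (1 - \<sigma> (promote b t) \<gamma>) + \<theta> * (1 - \<sigma> (promote b (swap_last a t)) \<gamma>)
      - (\<sigma> t b - \<sigma> t \<gamma>) = moved_gain \<theta> i (pos t \<gamma>)"
  using T_pairD(2)[OF assms(1)]
  by (simp add: sigma_def moved_gain_def pos_promote_b[OF assms] pos_promote_b_swap_last[OF assms]
      algebra_simps)

lemma sum_moved_gain:
  assumes "t \<in> T\<^sub>i i"
  shows "(\<Sum>\<gamma>\<in>C. moved_gain \<theta> i (pos t \<gamma>)) = real m * (1 - w i)"
proof -
  have t: "t \<in> rankings C" "\<sigma> t b = w i"
    using T_pairD[OF assms] sigma_T_pair[OF assms] by auto
  have up: "promote b t \<in> rankings C" "promote b (swap_last a t) \<in> rankings C"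
    using promote_b_T_first swap_last_ranking[OF t(1) a_in_C] T_first_subset t(1) by blast+
  have "(\<Sum>\<gamma>\<in>C. moved_gain \<theta> i (pos t \<gamma>))
      = (\<Sum>\<gamma>\<in>C. (1 - \<theta>) * (1 - \<sigma> (promote b t) \<gamma>) + \<theta> * (1 - \<sigma> (promote b (swap_last a t)) \<gamma>)
          - (w i - \<sigma> t \<gamma>))"
    using moved_gain_eq[OF assms] t(2) by simp
  also have "\<dots> = real m * (1 - w i)"
    using sum_sigma[OF up(1)] sum_sigma[OF up(2)] sum_sigma[OF t(1)]
    by (simp add: sum.distrib sum_subtractf sum_distrib_left[symmetric] algebra_simps)
  finally show ?thesis .
qed

lemma moved_gain_at_b: "1 \<le> i \<Longrightarrow> i < m \<Longrightarrow> moved_gain \<theta> i i = 0"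
  using w_first by (simp add: moved_gain_def promoted_pos_def algebra_simps)

lemma moved_gain_at_a: "i < m \<Longrightarrow> moved_gain \<theta> i (Suc i) = 1 - w i + \<theta> * w (Suc i)"
  using w_last by (simp add: moved_gain_def promoted_pos_def algebra_simps)

definition others :: "'c set" where
  "others = C - {a, b}"

lemma card_others: "card others = m - 2"
  using finite_C a_in_C b_in_C b_ne_a by (simp add: others_def card_Diff_subset)

lemma finite_others: "finite others"
  using finite_C by (simp add: others_def)

text \<open>When a type of \<open>T\<^sub>i i\<close> is moved, only the candidate at \<open>beneficiary_pos i\<close> can gain
  on \<open>b\<close> (for \<open>i = m - 1\<close> any position other than \<open>i, i + 1\<close> would do).\<close>

definition beneficiary_pos :: "nat \<Rightarrow> nat" where
  "beneficiary_pos i = (if i \<le> m - 2 then m else m - 2)"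

definition beneficiary :: "'c list \<Rightarrow> 'c" where
  "beneficiary t = t ! (beneficiary_pos (pos t b) - 1)"

lemma beneficiary_pos_bounds:
  assumes "1 \<le> i" "i < m"
  shows "1 \<le> beneficiary_pos i" "beneficiary_pos i \<le> m"
    and "beneficiary_pos i \<noteq> i" "beneficiary_pos i \<noteq> Suc i"
  using assms card_C_ge_3 by (auto simp: beneficiary_pos_def)

lemma moved_gain_nonneg:
  assumes "1 \<le> i" "i < m" "1 \<le> p" "p \<le> m" "p \<noteq> i" "p \<noteq> Suc i" "p \<noteq> beneficiary_pos i"
  shows "0 \<le> moved_gain \<theta> i p"
proof (cases "p < i")
  case True
  then have "moved_gain \<theta> i p = 1 - w i + (w p - w (Suc p))"
    using assms by (simp add: moved_gain_def promoted_pos_def algebra_simps)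
  moreover have "w (Suc p) \<le> w p"
    using w_antimono[of p "Suc p"] assms True by simp
  ultimately show ?thesis
    using w_le_1[of i] assms by simp
next
  case False
  then have "Suc i < p" "p \<noteq> m"
    using assms by (auto simp: beneficiary_pos_def split: if_splits)
  then have "moved_gain \<theta> i p = 1 - w i"
    by (simp add: moved_gain_def promoted_pos_def algebra_simps)
  then show ?thesis
    using w_le_1[of i] assms by simp
qed

lemma beneficiary_in_others:
  assumes "t \<in> T\<^sub>i i"
  shows "beneficiary t \<in> others" "pos t (beneficiary t) = beneficiary_pos i"
proof -
  note t = T_pairD[OF assms]
  note v = beneficiary_pos_bounds[OF t(4,5)]
  have j: "beneficiary_pos i - 1 < length t"
    using v length_ranking[OF t(1)] by simp
  show pos_beneficiary: "pos t (beneficiary t) = beneficiary_pos i"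
    using pos_eqI[OF distinct_ranking[OF t(1)] j] v t(2) by (simp add: beneficiary_def)
  have "beneficiary t \<in> C"
    using nth_mem[OF j] set_ranking[OF t(1)] t(2) by (simp add: beneficiary_def)
  moreover have "beneficiary t \<noteq> a" "beneficiary t \<noteq> b"
    using pos_beneficiary v t(2,3) by auto
  ultimately show "beneficiary t \<in> others"
    by (simp add: others_def)
qed

definition T_beneficiary :: "nat \<Rightarrow> 'c \<Rightarrow> 'c list set" where
  "T_beneficiary i \<beta> = {t \<in> T\<^sub>i i. beneficiary t = \<beta>}"

lemma T_beneficiaryD:
  assumes "t \<in> T_beneficiary i \<beta>"
  shows "t \<in> T\<^sub>i i" "pos t \<beta> = beneficiary_pos i"
  using assms beneficiary_in_others by (auto simp: T_beneficiary_def)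

lemma finite_T_beneficiary: "finite (T_beneficiary i \<beta>)"
  using finite_T_pair by (simp add: T_beneficiary_def)

lemma T_pair_eq_Union_T_beneficiary: "T\<^sub>i i = (\<Union>\<beta>\<in>others. T_beneficiary i \<beta>)"
  using beneficiary_in_others by (auto simp: T_beneficiary_def)

lemma T_beneficiary_nonempty:
  assumes "1 \<le> i" "i < m" "\<beta> \<in> others"
  shows "T_beneficiary i \<beta> \<noteq> {}"
proof -
  obtain L where L: "set L = others - {\<beta>}" "distinct L"
    using finite_distinct_list[of "others - {\<beta>}"] finite_others by auto
  have length_L: "length L = m - 3"
    using distinct_card[OF L(2)] L(1) card_Diff_singleton[OF assms(3)] card_others by simp
  have abL: "a \<notin> set L" "b \<notin> set L" "\<beta> \<notin> set L" "a \<noteq> \<beta>" "b \<noteq> \<beta>"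
    using L(1) assms(3) by (auto simp: others_def)
  have C_eq: "C = insert a (insert b (insert \<beta> (set L)))"
    using L(1) assms(3) a_in_C b_in_C by (auto simp: others_def)
  \<comment> \<open>\<open>b, a\<close> at positions \<open>i, i + 1\<close>, and \<open>\<beta>\<close> at \<open>beneficiary_pos i\<close>\<close>
  define t where "t = (if i \<le> m - 2
    then take (i - 1) L @ b # a # drop (i - 1) L @ [\<beta>] else L @ [\<beta>, b, a])"
  have "set (take (i - 1) L) \<union> set (drop (i - 1) L) = set L"
    by (metis append_take_drop_id set_append)
  then have "distinct t" "set t = C"
    using L(2) abL b_ne_a set_take_disj_set_drop_if_distinct[OF L(2), of "i - 1" "i - 1"]
    by (auto simp: t_def C_eq simp del: set_take_disj_set_drop_if_distinct)
  then have t: "t \<in> rankings C"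
    by (simp add: rankings_def permutations_of_set_def)
  have "pos t b = i" "pos t a = Suc i"
    using \<open>distinct t\<close> length_L assms card_C_ge_3
      pos_append_Cons[of "take (i - 1) L" b "a # drop (i - 1) L @ [\<beta>]"]
      pos_append_Cons[of "take (i - 1) L @ [b]" a "drop (i - 1) L @ [\<beta>]"]
      pos_append_Cons[of "L @ [\<beta>]" b "[a]"] pos_append_Cons[of "L @ [\<beta>, b]" a "[]"]
    by (auto simp: t_def)
  moreover have "beneficiary t = \<beta>"
    using \<open>pos t b = i\<close> length_L assms card_C_ge_3
    by (auto simp: beneficiary_def beneficiary_pos_def t_def nth_append min_def)
  ultimately show ?thesis
    using t by (auto simp: T_beneficiary_def T_pair_def)
qed

lemma map_transpose_T_beneficiary:
  assumes "t \<in> T_beneficiary i \<beta>" "\<gamma> \<in> others - {\<beta>}" "\<gamma>' \<in> others - {\<beta>}"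
  shows "map (Transposition.transpose \<gamma> \<gamma>') t \<in> T_beneficiary i \<beta>"
proof -
  let ?f = "Transposition.transpose \<gamma> \<gamma>'"
  have t: "t \<in> T\<^sub>i i" "beneficiary t = \<beta>"
    using assms(1) by (auto simp: T_beneficiary_def)
  note tp = T_pairD[OF t(1)]
  have fixed: "?f b = b" "?f a = a" "?f \<beta> = \<beta>"
    using assms(2,3) by (auto simp: others_def)
  have "map ?f t \<in> rankings C"
    using tp(1) assms(2,3) map_transpose_permutation by (auto simp: rankings_def others_def)
  moreover have pos_b: "pos (map ?f t) b = i" and "pos (map ?f t) a = Suc i"
    using pos_map_inj[OF inj_transpose, of \<gamma> \<gamma>' t] fixed tp(2,3) by metis+
  moreover have "beneficiary (map ?f t) = \<beta>"
    using t(2) fixed(3) beneficiary_pos_bounds[OF tp(4,5)] length_ranking[OF tp(1)] tp(2) pos_b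
    by (simp add: beneficiary_def)
  ultimately show ?thesis
    by (simp add: T_beneficiary_def T_pair_def)
qed

definition avg_gain :: "real \<Rightarrow> nat \<Rightarrow> 'c \<Rightarrow> 'c \<Rightarrow> real" where
  "avg_gain \<theta> i \<beta> \<gamma> = (\<Sum>t\<in>T_beneficiary i \<beta>. moved_gain \<theta> i (pos t \<gamma>)) / card (T_beneficiary i \<beta>)"

lemma avg_gain_const:
  assumes "1 \<le> i" "i < m" "\<beta> \<in> others" "\<And>t. t \<in> T_beneficiary i \<beta> \<Longrightarrow> moved_gain \<theta> i (pos t \<gamma>) = c"
  shows "avg_gain \<theta> i \<beta> \<gamma> = c"
  using assms T_beneficiary_nonempty[OF assms(1-3)] finite_T_beneficiary by (simp add: avg_gain_def)

lemma avg_gain_a: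
  "1 \<le> i \<Longrightarrow> i < m \<Longrightarrow> \<beta> \<in> others \<Longrightarrow> avg_gain \<theta> i \<beta> a = 1 - w i + \<theta> * w (Suc i)"
  using T_pairD(3)[OF T_beneficiaryD(1)] moved_gain_at_a by (intro avg_gain_const) auto

lemma avg_gain_beneficiary:
  "1 \<le> i \<Longrightarrow> i < m \<Longrightarrow> \<beta> \<in> others \<Longrightarrow> avg_gain \<theta> i \<beta> \<beta> = moved_gain \<theta> i (beneficiary_pos i)"
  by (rule avg_gain_const) (auto dest: T_beneficiaryD)

lemma sum_avg_gain:
  assumes "1 \<le> i" "i < m" "\<beta> \<in> others"
  shows "(\<Sum>\<gamma>\<in>others. avg_gain \<theta> i \<beta> \<gamma>) = real m * (1 - w i) - (1 - w i + \<theta> * w (Suc i))"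
proof -
  have "(\<Sum>\<gamma>\<in>others. moved_gain \<theta> i (pos t \<gamma>)) = real m * (1 - w i) - (1 - w i + \<theta> * w (Suc i))"
    if t: "t \<in> T_beneficiary i \<beta>" for t
  proof -
    note tp = T_pairD[OF T_beneficiaryD(1)[OF t]]
    have "(\<Sum>\<gamma>\<in>C. moved_gain \<theta> i (pos t \<gamma>))
        = (\<Sum>\<gamma>\<in>others. moved_gain \<theta> i (pos t \<gamma>)) + (\<Sum>\<gamma>\<in>{a, b}. moved_gain \<theta> i (pos t \<gamma>))"
      unfolding others_def using finite_C a_in_C b_in_C by (intro sum.subset_diff) auto
    then show ?thesis
      using sum_moved_gain[OF T_beneficiaryD(1)[OF t]] b_ne_a tp assms
      by (simp add: moved_gain_at_a moved_gain_at_b)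
  qed
  then have "(\<Sum>t\<in>T_beneficiary i \<beta>. \<Sum>\<gamma>\<in>others. moved_gain \<theta> i (pos t \<gamma>))
      = (\<Sum>t\<in>T_beneficiary i \<beta>. real m * (1 - w i) - (1 - w i + \<theta> * w (Suc i)))"
    by simp
  moreover have "(\<Sum>\<gamma>\<in>others. avg_gain \<theta> i \<beta> \<gamma>)
      = (\<Sum>t\<in>T_beneficiary i \<beta>. \<Sum>\<gamma>\<in>others. moved_gain \<theta> i (pos t \<gamma>)) / card (T_beneficiary i \<beta>)"
    unfolding avg_gain_def sum_divide_distrib[symmetric] by (subst sum.swap) (rule refl)
  ultimately show ?thesis
    using T_beneficiary_nonempty[OF assms] finite_T_beneficiary by simp
qed

lemma avg_gain_bystanders_eq:
  assumes "\<gamma> \<in> others - {\<beta>}" "\<gamma>' \<in> others - {\<beta>}"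
  shows "avg_gain \<theta> i \<beta> \<gamma> = avg_gain \<theta> i \<beta> \<gamma>'"
proof -
  let ?f = "Transposition.transpose \<gamma> \<gamma>'"
  have "(\<Sum>t\<in>T_beneficiary i \<beta>. moved_gain \<theta> i (pos t \<gamma>))
      = (\<Sum>t\<in>T_beneficiary i \<beta>. moved_gain \<theta> i (pos (map ?f t) \<gamma>))"
    by (rule sum.reindex_bij_witness[where i="map ?f" and j="map ?f"])
      (auto simp: map_transpose_T_beneficiary[OF _ assms] comp_def)
  also have "\<dots> = (\<Sum>t\<in>T_beneficiary i \<beta>. moved_gain \<theta> i (pos t \<gamma>'))"
    using pos_map_inj[OF inj_transpose, of \<gamma> \<gamma>' _ \<gamma>'] by simp
  finally show ?thesis
    by (simp add: avg_gain_def)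
qed

lemma avg_gain_bystander_nonneg:
  assumes "1 \<le> i" "i < m" "\<gamma> \<in> others - {\<beta>}"
  shows "0 \<le> avg_gain \<theta> i \<beta> \<gamma>"
  unfolding avg_gain_def
proof (intro divide_nonneg_nonneg sum_nonneg)
  fix t assume t: "t \<in> T_beneficiary i \<beta>"
  note tp = T_pairD[OF T_beneficiaryD(1)[OF t]]
  have \<gamma>: "\<gamma> \<in> C" "\<gamma> \<noteq> a" "\<gamma> \<noteq> b" "\<gamma> \<noteq> \<beta>"
    using assms(3) by (auto simp: others_def)
  have "\<beta> \<in> C"
    using beneficiary_in_others(1)[OF T_beneficiaryD(1)[OF t]] t
    by (auto simp: T_beneficiary_def others_def)
  then have "pos t \<gamma> \<noteq> i" "pos t \<gamma> \<noteq> Suc i" "pos t \<gamma> \<noteq> beneficiary_pos i"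
    using \<gamma> tp T_beneficiaryD(2)[OF t] a_in_C b_in_C set_ranking[OF tp(1)]
      pos_eq_iff[OF distinct_ranking[OF tp(1)]] by metis+
  then show "0 \<le> moved_gain \<theta> i (pos t \<gamma>)"
    using moved_gain_nonneg assms(1,2) pos_bounds[OF tp(1) \<gamma>(1)] by simp
qed simp

definition beneficiary_gain :: "real \<Rightarrow> nat \<Rightarrow> real" where
  "beneficiary_gain \<theta> i = moved_gain \<theta> i (beneficiary_pos i)"

text \<open>If \<open>others\<close> is a singleton there are no bystanders, and division by zero gives \<open>0\<close>.\<close>

definition bystander_gain :: "real \<Rightarrow> nat \<Rightarrow> real" where
  "bystander_gain \<theta> i = (real m * (1 - w i) - (1 - w i + \<theta> * w (Suc i)) - beneficiary_gain \<theta> i)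
     / (real (card others) - 1)"

lemma avg_gain_bystander:
  assumes "1 \<le> i" "i < m" "\<beta> \<in> others" "\<gamma> \<in> others - {\<beta>}"
  shows "avg_gain \<theta> i \<beta> \<gamma> = bystander_gain \<theta> i"
proof -
  have "1 \<le> card others"
    using card_others card_C_ge_3 by simp
  then have card: "real (card (others - {\<beta>})) = real (card others) - 1"
    using assms(3) finite_others by (simp add: card_Diff_singleton of_nat_diff)
  have "real m * (1 - w i) - (1 - w i + \<theta> * w (Suc i))
      = avg_gain \<theta> i \<beta> \<beta> + (\<Sum>\<delta>\<in>others - {\<beta>}. avg_gain \<theta> i \<beta> \<delta>)"
    using sum_avg_gain[OF assms(1-3)] finite_others assms(3) by (simp add: sum.remove)
  also have "(\<Sum>\<delta>\<in>others - {\<beta>}. avg_gain \<theta> i \<beta> \<delta>) = (real (card others) - 1) * avg_gain \<theta> i \<beta> \<gamma>"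
    using avg_gain_bystanders_eq[OF _ assms(4)] card by simp
  finally have "real m * (1 - w i) - (1 - w i + \<theta> * w (Suc i))
      = beneficiary_gain \<theta> i + (real (card others) - 1) * avg_gain \<theta> i \<beta> \<gamma>"
    using avg_gain_beneficiary[OF assms(1-3)] by (simp add: beneficiary_gain_def)
  moreover have "card {\<beta>, \<gamma>} \<le> card others"
    using assms(3,4) finite_others by (intro card_mono) auto
  then have "real (card others) - 1 > 0"
    using assms(4) by (auto simp: card_insert_if)
  ultimately show ?thesis
    by (simp add: bystander_gain_def field_simps)
qed

lemma bystander_gain_nonneg:
  assumes "1 \<le> i" "i < m"
  shows "0 \<le> bystander_gain \<theta> i"
proof (cases "card others \<le> 1")
  case True
  then have "card others = 1"
    using card_others card_C_ge_3 by simp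
  then show ?thesis
    by (simp add: bystander_gain_def)
next
  case False
  then obtain \<beta> \<gamma> where "\<beta> \<in> others" "\<gamma> \<in> others - {\<beta>}"
    using card_le_Suc0_iff_eq[OF finite_others] by auto
  then show ?thesis
    using avg_gain_bystander assms avg_gain_bystander_nonneg by metis
qed

lemma beneficiary_plus_bystanders:
  assumes "1 \<le> i" "i < m"
  shows "beneficiary_gain \<theta> i + (real (card others) - 1) * bystander_gain \<theta> i
    = real m * (1 - w i) - (1 - w i + \<theta> * w (Suc i))"
proof (cases "card others = 1")
  case True
  then obtain \<beta> where "others = {\<beta>}"
    by (rule card_1_singletonE)
  then show ?thesis
    using sum_avg_gain[OF assms, of \<beta> \<theta>] avg_gain_beneficiary[OF assms, of \<beta> \<theta>] True
    by (simp add: beneficiary_gain_def)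
next
  case False
  then show ?thesis
    by (simp add: bystander_gain_def)
qed

definition move_x :: "(nat \<Rightarrow> real) \<Rightarrow> ('c \<Rightarrow> real) \<Rightarrow> 'c list \<Rightarrow> real" where
  "move_x z \<rho> t = z (pos t b) * \<rho> (beneficiary t) / card (T_beneficiary (pos t b) (beneficiary t))"

definition move_y :: "(nat \<Rightarrow> real) \<Rightarrow> ('c \<Rightarrow> real) \<Rightarrow> real \<Rightarrow> 'c list \<Rightarrow> real" where
  "move_y z \<rho> \<theta> u = (\<Sum>t\<in>T\<^sub>b\<^sub>a. move_x z \<rho> t *
     ((1 - \<theta>) * of_bool (promote b t = u) + \<theta> * of_bool (promote b (swap_last a t) = u)))"

lemma sum_move_x:
  "(\<Sum>t\<in>T\<^sub>b\<^sub>a. move_x z \<rho> t * g (pos t b) t)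
    = (\<Sum>i=1..m-1. \<Sum>\<beta>\<in>others.
        z i * \<rho> \<beta> * ((\<Sum>t\<in>T_beneficiary i \<beta>. g i t) / card (T_beneficiary i \<beta>)))"
proof -
  have "(\<Sum>t\<in>T\<^sub>b\<^sub>a. move_x z \<rho> t * g (pos t b) t)
      = (\<Sum>i=1..m-1. \<Sum>\<beta>\<in>others. \<Sum>t\<in>T_beneficiary i \<beta>. move_x z \<rho> t * g (pos t b) t)"
    unfolding sum_T_ba T_pair_eq_Union_T_beneficiary
    using finite_others finite_T_beneficiary
    by (intro sum.cong refl sum.UNION_disjoint) (auto simp: T_beneficiary_def)
  also have "\<dots> = (\<Sum>i=1..m-1. \<Sum>\<beta>\<in>others. \<Sum>t\<in>T_beneficiary i \<beta>.
      z i * \<rho> \<beta> / card (T_beneficiary i \<beta>) * g i t)"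
    by (intro sum.cong refl) (auto simp: move_x_def T_beneficiary_def T_pair_def)
  finally show ?thesis
    by (simp add: sum_distrib_left[symmetric] sum_divide_distrib[symmetric])
qed

lemma sum_move_y:
  "(\<Sum>u\<in>T\<^sub>b. move_y z \<rho> \<theta> u * f u)
    = (\<Sum>t\<in>T\<^sub>b\<^sub>a. move_x z \<rho> t * ((1 - \<theta>) * f (promote b t) + \<theta> * f (promote b (swap_last a t))))"
proof -
  have targets: "promote b t \<in> T\<^sub>b" "promote b (swap_last a t) \<in> T\<^sub>b" if "t \<in> T\<^sub>b\<^sub>a" for t
    using that T_ba_subset swap_last_ranking a_in_C promote_b_T_first by blast+
  have delta: "(\<Sum>u\<in>T\<^sub>b. of_bool (v = u) * f u) = f v" if "v \<in> T\<^sub>b" for v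
  proof -
    have "(\<Sum>u\<in>T\<^sub>b. of_bool (v = u) * f u) = (\<Sum>u\<in>T\<^sub>b. if v = u then f u else 0)"
      by (intro sum.cong) auto
    then show ?thesis
      using finite_T_first that by simp
  qed
  have "(\<Sum>u\<in>T\<^sub>b. move_y z \<rho> \<theta> u * f u) = (\<Sum>t\<in>T\<^sub>b\<^sub>a. \<Sum>u\<in>T\<^sub>b. move_x z \<rho> t *
      ((1 - \<theta>) * (of_bool (promote b t = u) * f u)
        + \<theta> * (of_bool (promote b (swap_last a t) = u) * f u)))"
    unfolding move_y_def sum_distrib_right by (subst sum.swap) (simp add: algebra_simps)
  also have "\<dots> = (\<Sum>t\<in>T\<^sub>b\<^sub>a. move_x z \<rho> t *
      ((1 - \<theta>) * f (promote b t) + \<theta> * f (promote b (swap_last a t))))"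
    by (intro sum.cong refl) (simp add: sum.distrib sum_distrib_left[symmetric] delta targets)
  finally show ?thesis .
qed

lemma gain_move:
  assumes "\<gamma> \<in> C"
  shows "gain (move_x z \<rho>) (move_y z \<rho> \<theta>) \<gamma>
    = (\<Sum>i=1..m-1. \<Sum>\<beta>\<in>others. z i * \<rho> \<beta> * avg_gain \<theta> i \<beta> \<gamma>)"
proof -
  have "gain (move_x z \<rho>) (move_y z \<rho> \<theta>) \<gamma>
      = (\<Sum>t\<in>T\<^sub>b\<^sub>a. move_x z \<rho> t * ((1 - \<theta>) * (1 - \<sigma> (promote b t) \<gamma>)
          + \<theta> * (1 - \<sigma> (promote b (swap_last a t)) \<gamma>) - (\<sigma> t b - \<sigma> t \<gamma>)))"
    unfolding gain_def sum_move_y sum_subtractf[symmetric] right_diff_distrib[symmetric] ..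
  also have "\<dots> = (\<Sum>t\<in>T\<^sub>b\<^sub>a. move_x z \<rho> t * moved_gain \<theta> (pos t b) (pos t \<gamma>))"
    using moved_gain_eq[OF T_baD assms] by simp
  also have "\<dots> = (\<Sum>i=1..m-1. \<Sum>\<beta>\<in>others. z i * \<rho> \<beta> * avg_gain \<theta> i \<beta> \<gamma>)"
    unfolding avg_gain_def by (rule sum_move_x)
  finally show ?thesis .
qed


lemma gain_move_a:
  assumes "sum \<rho> others = 1"
  shows "gain (move_x z \<rho>) (move_y z \<rho> \<theta>) a
    = (\<Sum>i=1..m-1. (1 - w i) * z i) + \<theta> * (\<Sum>i=1..m-1. w (Suc i) * z i)"
proof -
  have "(\<Sum>\<beta>\<in>others. z i * \<rho> \<beta> * avg_gain \<theta> i \<beta> a) = (1 - w i) * z i + \<theta> * (w (Suc i) * z i)"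
    if "i \<in> {1..m-1}" for i
  proof -
    have "(\<Sum>\<beta>\<in>others. z i * \<rho> \<beta> * avg_gain \<theta> i \<beta> a)
        = (\<Sum>\<beta>\<in>others. z i * (1 - w i + \<theta> * w (Suc i)) * \<rho> \<beta>)"
      using that avg_gain_a by (intro sum.cong refl) auto
    also have "\<dots> = z i * (1 - w i + \<theta> * w (Suc i)) * sum \<rho> others"
      by (simp add: sum_distrib_left)
    finally show ?thesis
      using assms by (simp add: algebra_simps)
  qed
  then show ?thesis
    by (simp add: gain_move[OF a_in_C] sum.distrib sum_distrib_left)
qed

lemma gain_move_others:
  assumes "sum \<rho> others = 1" "\<gamma> \<in> others"
  shows "gain (move_x z \<rho>) (move_y z \<rho> \<theta>) \<gamma>
    = \<rho> \<gamma> * (\<Sum>i=1..m-1. z i * beneficiary_gain \<theta> i)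
      + (1 - \<rho> \<gamma>) * (\<Sum>i=1..m-1. z i * bystander_gain \<theta> i)"
proof -
  have "(\<Sum>\<beta>\<in>others. z i * \<rho> \<beta> * avg_gain \<theta> i \<beta> \<gamma>)
      = \<rho> \<gamma> * (z i * beneficiary_gain \<theta> i) + (1 - \<rho> \<gamma>) * (z i * bystander_gain \<theta> i)"
    if "i \<in> {1..m-1}" for i
  proof -
    have i: "1 \<le> i" "i < m"
      using that card_C_ge_3 by auto
    have "(\<Sum>\<beta>\<in>others - {\<gamma>}. z i * \<rho> \<beta> * avg_gain \<theta> i \<beta> \<gamma>)
        = (\<Sum>\<beta>\<in>others - {\<gamma>}. z i * bystander_gain \<theta> i * \<rho> \<beta>)"
      using i assms(2) avg_gain_bystander by (intro sum.cong refl) auto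
    also have "\<dots> = (1 - \<rho> \<gamma>) * (z i * bystander_gain \<theta> i)"
      using assms finite_others by (simp add: sum_distrib_left[symmetric] sum_diff1)
    finally show ?thesis
      using i assms(2) finite_others avg_gain_beneficiary[of i \<gamma> \<theta>]
      by (simp add: sum.remove beneficiary_gain_def)
  qed
  moreover have "\<gamma> \<in> C"
    using assms(2) by (simp add: others_def)
  ultimately have "gain (move_x z \<rho>) (move_y z \<rho> \<theta>) \<gamma> = (\<Sum>i=1..m-1.
      \<rho> \<gamma> * (z i * beneficiary_gain \<theta> i) + (1 - \<rho> \<gamma>) * (z i * bystander_gain \<theta> i))"
    by (simp add: gain_move)
  then show ?thesis
    by (simp add: sum.distrib sum_distrib_left)
qed

lemma sum_move_x_total:
  assumes "sum \<rho> others = 1"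
  shows "(\<Sum>t\<in>T\<^sub>b\<^sub>a. move_x z \<rho> t) = (\<Sum>i=1..m-1. z i)"
proof -
  have "(\<Sum>t\<in>T\<^sub>b\<^sub>a. move_x z \<rho> t)
      = (\<Sum>i=1..m-1. \<Sum>\<beta>\<in>others. z i * \<rho> \<beta> * (card (T_beneficiary i \<beta>) / card (T_beneficiary i \<beta>)))"
    using sum_move_x[of z \<rho> "\<lambda>_ _. 1"] by simp
  also have "\<dots> = (\<Sum>i=1..m-1. \<Sum>\<beta>\<in>others. z i * \<rho> \<beta>)"
    using T_beneficiary_nonempty finite_T_beneficiary by (intro sum.cong refl) auto
  finally show ?thesis
    using assms by (simp add: sum_distrib_left[symmetric])
qed

lemma sum_move_y_total: "(\<Sum>u\<in>T\<^sub>b. move_y z \<rho> \<theta> u) = (\<Sum>t\<in>T\<^sub>b\<^sub>a. move_x z \<rho> t)"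
  using sum_move_y[of z \<rho> \<theta> "\<lambda>_. 1"] by simp

lemma move_x_nonneg:
  assumes "\<forall>i\<in>{1..m-1}. 0 \<le> z i" "\<forall>\<beta>\<in>others. 0 \<le> \<rho> \<beta>" "t \<in> T\<^sub>b\<^sub>a"
  shows "0 \<le> move_x z \<rho> t"
proof -
  have "pos t b \<in> {1..m-1}" "beneficiary t \<in> others"
    using T_pairD[OF T_baD] beneficiary_in_others(1)[OF T_baD] assms(3) by fastforce+
  then show ?thesis
    using assms(1,2) by (simp add: move_x_def)
qed

lemma move_y_nonneg:
  assumes "\<forall>i\<in>{1..m-1}. 0 \<le> z i" "\<forall>\<beta>\<in>others. 0 \<le> \<rho> \<beta>" "0 \<le> \<theta>" "\<theta> \<le> 1"
  shows "0 \<le> move_y z \<rho> \<theta> u"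
  using assms move_x_nonneg[OF assms(1,2)] by (auto simp: move_y_def intro!: sum_nonneg)

lemma LP1_feasible_move:
  assumes "\<forall>i\<in>{1..m-1}. 0 \<le> z i" "0 \<le> \<theta>" "\<theta> \<le> 1"
    and "\<forall>\<gamma>\<in>others. 0 \<le> \<rho> \<gamma>" "sum \<rho> others = 1"
    and "sc a - sc b \<le> (\<Sum>i=1..m-1. (1 - w i) * z i) + \<theta> * (\<Sum>i=1..m-1. w (Suc i) * z i)"
    and "\<forall>\<gamma>\<in>others. sc \<gamma> - sc b
      \<le> \<rho> \<gamma> * (\<Sum>i=1..m-1. z i * beneficiary_gain \<theta> i)
        + (1 - \<rho> \<gamma>) * (\<Sum>i=1..m-1. z i * bystander_gain \<theta> i)"
  shows "LP1_feasible (move_x z \<rho>) (move_y z \<rho> \<theta>)"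
proof -
  have "sc \<alpha> - sc b \<le> gain (move_x z \<rho>) (move_y z \<rho> \<theta>) \<alpha>" if "\<alpha> \<in> C" "\<alpha> \<noteq> b" for \<alpha>
  proof (cases "\<alpha> = a")
    case True
    then show ?thesis using assms(5,6) gain_move_a by simp
  next
    case False
    then have "\<alpha> \<in> others" using that by (simp add: others_def)
    then show ?thesis using assms(5,7) gain_move_others by simp
  qed
  then show ?thesis
    using assms(1-5) move_x_nonneg move_y_nonneg sum_move_y_total by (simp add: LP1_feasible_def)
qed

lemma score_gap_others:
  "real voters * W - real m * sc b = (sc a - sc b) - (\<Sum>\<gamma>\<in>others. sc b - sc \<gamma>)"
proof -
  have "C - {b} = insert a others" "a \<notin> others"
    using a_in_C b_ne_a by (auto simp: others_def)
  moreover have "real (card others) = real m - 2"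
    using card_others card_C_ge_3 by (simp add: of_nat_diff)
  ultimately show ?thesis
    using sum_score_gap finite_others by (simp add: sum_subtractf algebra_simps)
qed

lemma LP1_feasible_from_LP2_feasible:
  assumes "LP2_feasible z" "\<And>\<alpha>. \<alpha> \<in> C \<Longrightarrow> \<alpha> \<noteq> a \<Longrightarrow> sc \<alpha> \<le> sc b"
  shows "\<exists>x y. LP1_feasible x y \<and> (\<Sum>t\<in>T\<^sub>b\<^sub>a. x t) = (\<Sum>i=1..m-1. z i)"
proof -
  define A B where "A = (\<Sum>i=1..m-1. (1 - w i) * z i)" and "B = (\<Sum>i=1..m-1. w (Suc i) * z i)"
  define e where "e \<gamma> = sc b - sc \<gamma>" for \<gamma>
  have z: "\<forall>i\<in>{1..m-1}. 0 \<le> z i"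
    using assms(1) by (simp add: LP2_feasible_def)
  have e: "\<And>\<gamma>. \<gamma> \<in> others \<Longrightarrow> 0 \<le> e \<gamma>"
    using assms(2) by (simp add: e_def others_def)
  have "sc a - sc b \<le> A + B"
    using assms(1) by (simp add: LP2_feasible_def A_def B_def sum.distrib[symmetric] algebra_simps)
  moreover have "sc a - sc b - sum e others \<le> real m * A"
    using assms(1) card_C_ge_3 score_gap_others
    by (simp add: LP2_feasible_def A_def e_def field_simps)
  moreover have "0 \<le> A"
    using z w_le_1 by (auto simp: A_def intro!: sum_nonneg)
  ultimately obtain \<theta> where \<theta>: "0 \<le> \<theta>" "\<theta> \<le> 1" "sc a - sc b \<le> A + \<theta> * B"
    and slack: "- sum e others \<le> real m * A - (A + \<theta> * B)"
    using mixing_weight_exists[of A "sc a - sc b" B "sum e others" "real m"] e card_C_ge_3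
    by (auto simp: sum_nonneg)
  define V U where "V = (\<Sum>i=1..m-1. z i * beneficiary_gain \<theta> i)"
    and "U = (\<Sum>i=1..m-1. z i * bystander_gain \<theta> i)"
  have "V + (real (card others) - 1) * U
      = (\<Sum>i=1..m-1. z i * (beneficiary_gain \<theta> i + (real (card others) - 1) * bystander_gain \<theta> i))"
    unfolding V_def U_def sum_distrib_left sum.distrib[symmetric] by (simp add: algebra_simps)
  also have "\<dots> = (\<Sum>i=1..m-1.
      real m * ((1 - w i) * z i) - ((1 - w i) * z i + \<theta> * (w (Suc i) * z i)))"
  proof (intro sum.cong refl)
    fix i assume "i \<in> {1..m-1}"
    then have "1 \<le> i" "i < m"
      using card_C_ge_3 by auto
    then show "z i * (beneficiary_gain \<theta> i + (real (card others) - 1) * bystander_gain \<theta> i)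
        = real m * ((1 - w i) * z i) - ((1 - w i) * z i + \<theta> * (w (Suc i) * z i))"
      unfolding beneficiary_plus_bystanders[OF \<open>1 \<le> i\<close> \<open>i < m\<close>] by (simp add: algebra_simps)
  qed
  also have "\<dots> = real m * A - (A + \<theta> * B)"
    by (simp add: A_def B_def sum_subtractf sum.distrib sum_distrib_left)
  finally have "V + (real (card others) - 1) * U = real m * A - (A + \<theta> * B)" .
  moreover have "0 \<le> U"
    using z bystander_gain_nonneg by (auto simp: U_def intro!: sum_nonneg)
  moreover have "others \<noteq> {}"
    using card_others card_C_ge_3 by auto
  ultimately obtain \<rho> where "\<forall>\<gamma>\<in>others. 0 \<le> \<rho> \<gamma>" "sum \<rho> others = 1"
    "\<forall>\<gamma>\<in>others. - e \<gamma> \<le> \<rho> \<gamma> * V + (1 - \<rho> \<gamma>) * U"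
    using beneficiary_weights_exist[of others e U V] finite_others e slack by auto
  then show ?thesis
    using LP1_feasible_move[OF z \<theta>(1,2)] \<theta>(3) sum_move_x_total
    unfolding A_def B_def V_def U_def e_def by fastforce
qed

lemma LP1_value_le_LP2_value:
  assumes "\<And>\<alpha>. \<alpha> \<in> C \<Longrightarrow> \<alpha> \<noteq> a \<Longrightarrow> sc \<alpha> \<le> sc b"
  shows "LP1_value C w N a b \<le> LP2_value C w N a b"
  unfolding LP1_value_eq LP2_value_eq
  using LP1_feasible_from_LP2_feasible[OF _ assms] by (intro Inf_mono) force

end

theorem corollary10:
  fixes C :: "'c set" and w :: "nat \<Rightarrow> real" and N :: "'c list \<Rightarrow> nat" and a b :: 'c
  assumes "finite C" and "card C \<ge> 3"
    and "w 1 = 1" and "w (card C) = 0"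
    and "\<And>i j. 1 \<le> i \<Longrightarrow> i \<le> j \<Longrightarrow> j \<le> card C \<Longrightarrow> w j \<le> w i"
    and "a \<in> C" and "b \<in> C" and "b \<noteq> a"
    and "\<And>alpha. alpha \<in> C \<Longrightarrow> alpha \<noteq> a \<Longrightarrow> score C w N a > score C w N alpha"
    and "\<And>alpha. alpha \<in> C \<Longrightarrow> alpha \<noteq> a \<Longrightarrow> score C w N b \<ge> score C w N alpha"
  shows "LP1_value C w N a b = LP2_value C w N a b"
proof -
  interpret election C w N a b
    using assms(1-8) by unfold_locales
  show ?thesis
    using LP1_value_le_LP2_value[OF assms(10)] LP2_value_le_LP1_value by (rule antisym)
qed

end
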